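(* For an $M$-memory $(T(n),IO(n))$-time $S(n)$-space RATM-TLM $\mathcal M$, a RATM-BIO $\mathcal M'$ can simulate $\mathcal M$ with $O(IO(n)\cdot S(n))$ external access trace complexity.
   Context: A RATM-TLM with main memory size $M$ has a main memory tape of $M$ cells with random access (a main-memory address tape and a random access state $q_a$; entering $q_a$ moves the main head in one step to the cell whose index is on that address tape), an unbounded external memory tape and an external address tape; it has read and write states: on entering a read state an address $addr$ is written on the external address tape and the main memory cell under the head receives the content of external cell $addr$; a write state does the reverse. Each Read/Write is one unit-cost IO operation. Time = number of transitions other than Read/Write; IO time = number of Read/Write; space = number of external cells used; an $M$-memory $(T(n),IO(n))$-time $S(n)$-space machine has main memory size $M$ and time, IO, space complexities $O(T(n))$, $O(IO(n))$, $O(S(n))$. A RATM-BIO (random access Turing machine with blocking IO) has four tapes: a main memory tape with its address tape, and an external memory tape with its address tape; a main head with random access on the main tape and an external head that moves only one cell at a time on the external tape. Its transitions are main memory computation transitions (main head moves, external head halts), external memory access transitions (external head moves one step, main head halts), and read/write transitions: on entering a read (write) state an external address is written, the main head halts and the external head moves step by step to the designated external cell; when reached, the content of that cell replaces (is replaced by) the content of the main memory cell under the main head, and main memory computation resumes. The external access trace complexity is the total number of moves of the external head. *)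

theory Defs
  imports Main
begin

text \<open>Tapes are functions nat => nat; symbol 0 is the blank.  Addresses on address
tapes are written in binary, least significant bit in cell 0, with symbol 1 encoding
bit 0 and symbol 2 encoding bit 1; the address ends at the first cell holding a symbol
other than 1 or 2.\<close>

datatype dir = DL | DR | DS

definition mv :: "dir \<Rightarrow> nat \<Rightarrow> nat" where
  "mv d p = (case d of DL \<Rightarrow> p - 1 | DR \<Rightarrow> Suc p | DS \<Rightarrow> p)"

definition mv_bounded :: "nat \<Rightarrow> dir \<Rightarrow> nat \<Rightarrow> nat" where
  "mv_bounded M d p = (if mv d p < M then mv d p else p)"

definition addr_len :: "(nat \<Rightarrow> nat) \<Rightarrow> nat" where
  "addr_len t = (LEAST i. t i \<notin> {1, 2})"

definition addr_val :: "(nat \<Rightarrow> nat) \<Rightarrow> nat" where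
  "addr_val t = (\<Sum>i<addr_len t. (t i - 1) * 2 ^ i)"

definition input_tape :: "nat list \<Rightarrow> nat \<Rightarrow> nat" where
  "input_tape w i = (if i < length w then w ! i else 0)"

definition valid_input :: "nat set \<Rightarrow> nat list \<Rightarrow> bool" where
  "valid_input \<Sigma> w \<longleftrightarrow> set w \<subseteq> \<Sigma>"

text \<open>Transition function: (state, symbol under main head, symbol under main-address
head, symbol under external-address head) gives (new state, symbols written on these
three tapes, moves of these three heads).  The special effects (random access,
Read, Write) happen on entering the corresponding state.\<close>

record tlm =
  t_states :: "nat set"
  t_init :: nat
  t_acc :: "nat set"
  t_rej :: "nat set"
  t_qa :: nat
  t_rd :: "nat set"
  t_wr :: "nat set"
  t_alpha :: "nat set"
  t_sigma :: "nat set"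
  t_mem :: nat
  t_delta :: "nat \<Rightarrow> nat \<Rightarrow> nat \<Rightarrow> nat \<Rightarrow> nat \<times> nat \<times> nat \<times> nat \<times> dir \<times> dir \<times> dir"

definition wf_tlm :: "tlm \<Rightarrow> bool" where
  "wf_tlm m \<longleftrightarrow>
     finite (t_states m) \<and> finite (t_alpha m) \<and> t_mem m \<ge> 1 \<and>
     t_init m \<in> t_states m \<and> t_qa m \<in> t_states m \<and>
     t_acc m \<subseteq> t_states m \<and> t_rej m \<subseteq> t_states m \<and>
     t_rd m \<subseteq> t_states m \<and> t_wr m \<subseteq> t_states m \<and>
     t_acc m \<inter> t_rej m = {} \<and> t_rd m \<inter> t_wr m = {} \<and>
     (t_rd m \<union> t_wr m) \<inter> (t_acc m \<union> t_rej m) = {} \<and>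
     t_qa m \<notin> t_rd m \<union> t_wr m \<union> t_acc m \<union> t_rej m \<and>
     {0, 1, 2} \<subseteq> t_alpha m \<and> t_sigma m \<subseteq> t_alpha m - {0} \<and>
     (\<forall>q a b c. q \<in> t_states m - (t_acc m \<union> t_rej m) \<longrightarrow>
        a \<in> t_alpha m \<longrightarrow> b \<in> t_alpha m \<longrightarrow> c \<in> t_alpha m \<longrightarrow>
        (case t_delta m q a b c of (q', x, y, z, _) \<Rightarrow>
           q' \<in> t_states m \<and> x \<in> t_alpha m \<and> y \<in> t_alpha m \<and> z \<in> t_alpha m))"

record tconf =
  tc_state :: nat
  tc_main :: "nat \<Rightarrow> nat"
  tc_mhead :: nat
  tc_maddr :: "nat \<Rightarrow> nat"
  tc_mahead :: nat
  tc_ext :: "nat \<Rightarrow> nat"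
  tc_eaddr :: "nat \<Rightarrow> nat"
  tc_eahead :: nat

definition tlm_init_conf :: "tlm \<Rightarrow> nat list \<Rightarrow> tconf" where
  "tlm_init_conf m w = \<lparr> tc_state = t_init m, tc_main = (\<lambda>_. 0), tc_mhead = 0,
     tc_maddr = (\<lambda>_. 0), tc_mahead = 0, tc_ext = input_tape w,
     tc_eaddr = (\<lambda>_. 0), tc_eahead = 0 \<rparr>"

definition tlm_step :: "tlm \<Rightarrow> tconf \<Rightarrow> tconf" where
  "tlm_step m c =
    (case t_delta m (tc_state c) (tc_main c (tc_mhead c)) (tc_maddr c (tc_mahead c))
                    (tc_eaddr c (tc_eahead c)) of
      (q', wm, wa, we, dm, da, de) \<Rightarrow>
        let mt1 = (tc_main c)(tc_mhead c := wm);
            mat1 = (tc_maddr c)(tc_mahead c := wa);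
            eat1 = (tc_eaddr c)(tc_eahead c := we);
            mh1 = mv_bounded (t_mem m) dm (tc_mhead c);
            mah1 = mv da (tc_mahead c);
            eah1 = mv de (tc_eahead c);
            mh2 = (if q' = t_qa m \<and> addr_val mat1 < t_mem m then addr_val mat1 else mh1);
            ad = addr_val eat1;
            mt2 = (if q' \<in> t_rd m then mt1(mh2 := tc_ext c ad) else mt1);
            et2 = (if q' \<in> t_wr m then (tc_ext c)(ad := mt1 mh2) else tc_ext c)
        in \<lparr> tc_state = q', tc_main = mt2, tc_mhead = mh2, tc_maddr = mat1,
             tc_mahead = mah1, tc_ext = et2, tc_eaddr = eat1, tc_eahead = eah1 \<rparr>)"

definition tlm_conf :: "tlm \<Rightarrow> nat list \<Rightarrow> nat \<Rightarrow> tconf" where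
  "tlm_conf m w k = (tlm_step m ^^ k) (tlm_init_conf m w)"

definition tlm_halted :: "tlm \<Rightarrow> tconf \<Rightarrow> bool" where
  "tlm_halted m c \<longleftrightarrow> tc_state c \<in> t_acc m \<union> t_rej m"

definition tlm_halts :: "tlm \<Rightarrow> nat list \<Rightarrow> bool" where
  "tlm_halts m w \<longleftrightarrow> (\<exists>k. tlm_halted m (tlm_conf m w k))"

definition tlm_steps :: "tlm \<Rightarrow> nat list \<Rightarrow> nat" where
  "tlm_steps m w = (LEAST k. tlm_halted m (tlm_conf m w k))"

definition tlm_result :: "tlm \<Rightarrow> nat list \<Rightarrow> bool option" where
  "tlm_result m w = (if tlm_halts m w
      then Some (tc_state (tlm_conf m w (tlm_steps m w)) \<in> t_acc m) else None)"

text \<open>Step k (from configuration k to k+1) is an IO operation iff it enters a read or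
write state.\<close>
definition tlm_is_io :: "tlm \<Rightarrow> nat list \<Rightarrow> nat \<Rightarrow> bool" where
  "tlm_is_io m w k \<longleftrightarrow> tc_state (tlm_conf m w (Suc k)) \<in> t_rd m \<union> t_wr m"

definition tlm_time :: "tlm \<Rightarrow> nat list \<Rightarrow> nat" where
  "tlm_time m w = card {k. k < tlm_steps m w \<and> \<not> tlm_is_io m w k}"

definition tlm_io :: "tlm \<Rightarrow> nat list \<Rightarrow> nat" where
  "tlm_io m w = card {k. k < tlm_steps m w \<and> tlm_is_io m w k}"

text \<open>External cells used: the input cells 0..n-1 and all cells accessed by Read/Write;
space is the extent of the used part of the external tape.\<close>
definition tlm_space :: "tlm \<Rightarrow> nat list \<Rightarrow> nat" where
  "tlm_space m w = Max ({length w} \<union>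
      {Suc (addr_val (tc_eaddr (tlm_conf m w (Suc k)))) | k. k < tlm_steps m w \<and> tlm_is_io m w k})"

text \<open>M is an M-memory (T(n),IO(n))-time S(n)-space machine (M = t_mem m): on all
inputs of length n (for n large enough) it halts, and time, IO time and space are
bounded by constant multiples of T(n), IO(n), S(n).\<close>
definition tlm_complexity :: "tlm \<Rightarrow> (nat \<Rightarrow> nat) \<Rightarrow> (nat \<Rightarrow> nat) \<Rightarrow> (nat \<Rightarrow> nat) \<Rightarrow> bool" where
  "tlm_complexity m T IO S \<longleftrightarrow>
     (\<exists>c N. \<forall>w. valid_input (t_sigma m) w \<and> length w \<ge> N \<longrightarrow>
        tlm_halts m w \<and> tlm_time m w \<le> c * T (length w) \<and>
        tlm_io m w \<le> c * IO (length w) \<and> tlm_space m w \<le> c * S (length w))"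

text \<open>Transitions are either main memory computation transitions (acting on the main
tape, main address tape and external address tape; the external head halts) or
external memory access transitions (writing the external cell under the external head
and moving the external head by at most one cell; the main head halts).\<close>

datatype btrans =
    Comp nat nat nat nat dir dir dir
  | ExtAcc nat nat dir

record bio =
  b_states :: "nat set"
  b_init :: nat
  b_acc :: "nat set"
  b_rej :: "nat set"
  b_qa :: nat
  b_rd :: "nat set"
  b_wr :: "nat set"
  b_alpha :: "nat set"
  b_sigma :: "nat set"
  b_mem :: nat
  b_delta :: "nat \<Rightarrow> nat \<Rightarrow> nat \<Rightarrow> nat \<Rightarrow> nat \<Rightarrow> btrans"

fun btrans_ok :: "bio \<Rightarrow> btrans \<Rightarrow> bool" where
  "btrans_ok m (Comp q x y z _ _ _) \<longleftrightarrow>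
     q \<in> b_states m \<and> x \<in> b_alpha m \<and> y \<in> b_alpha m \<and> z \<in> b_alpha m"
| "btrans_ok m (ExtAcc q x d) \<longleftrightarrow> q \<in> b_states m \<and> x \<in> b_alpha m \<and> d \<noteq> DS"

definition wf_bio :: "bio \<Rightarrow> bool" where
  "wf_bio m \<longleftrightarrow>
     finite (b_states m) \<and> finite (b_alpha m) \<and> b_mem m \<ge> 1 \<and>
     b_init m \<in> b_states m \<and> b_qa m \<in> b_states m \<and>
     b_acc m \<subseteq> b_states m \<and> b_rej m \<subseteq> b_states m \<and>
     b_rd m \<subseteq> b_states m \<and> b_wr m \<subseteq> b_states m \<and>
     b_acc m \<inter> b_rej m = {} \<and> b_rd m \<inter> b_wr m = {} \<and>
     (b_rd m \<union> b_wr m) \<inter> (b_acc m \<union> b_rej m) = {} \<and>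
     b_qa m \<notin> b_rd m \<union> b_wr m \<union> b_acc m \<union> b_rej m \<and>
     {0, 1, 2} \<subseteq> b_alpha m \<and> b_sigma m \<subseteq> b_alpha m - {0} \<and>
     (\<forall>q a b c e. q \<in> b_states m - (b_acc m \<union> b_rej m) \<longrightarrow>
        a \<in> b_alpha m \<longrightarrow> b \<in> b_alpha m \<longrightarrow> c \<in> b_alpha m \<longrightarrow> e \<in> b_alpha m \<longrightarrow>
        btrans_ok m (b_delta m q a b c e))"

record bconf =
  bc_state :: nat
  bc_main :: "nat \<Rightarrow> nat"
  bc_mhead :: nat
  bc_maddr :: "nat \<Rightarrow> nat"
  bc_mahead :: nat
  bc_ext :: "nat \<Rightarrow> nat"
  bc_ehead :: nat
  bc_eaddr :: "nat \<Rightarrow> nat"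
  bc_eahead :: nat

definition bio_init_conf :: "bio \<Rightarrow> nat list \<Rightarrow> bconf" where
  "bio_init_conf m w = \<lparr> bc_state = b_init m, bc_main = (\<lambda>_. 0), bc_mhead = 0,
     bc_maddr = (\<lambda>_. 0), bc_mahead = 0, bc_ext = input_tape w, bc_ehead = 0,
     bc_eaddr = (\<lambda>_. 0), bc_eahead = 0 \<rparr>"

text \<open>Effects on entering a state: random access state (main head jumps), read/write
states (the external head walks cell by cell to the address on the external address
tape, then the content is copied).  Returns the new configuration and the number of
moves of the external head.\<close>
definition bio_enter :: "bio \<Rightarrow> bconf \<Rightarrow> bconf \<times> nat" where
  "bio_enter m c =
    (let q = bc_state c;
         a = addr_val (bc_maddr c);
         c1 = (if q = b_qa m \<and> a < b_mem m then c\<lparr>bc_mhead := a\<rparr> else c);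
         ad = addr_val (bc_eaddr c1);
         dist = (if bc_ehead c1 \<le> ad then ad - bc_ehead c1 else bc_ehead c1 - ad)
     in if q \<in> b_rd m then
          (c1\<lparr>bc_ehead := ad, bc_main := (bc_main c1)(bc_mhead c1 := bc_ext c1 ad)\<rparr>, dist)
        else if q \<in> b_wr m then
          (c1\<lparr>bc_ehead := ad, bc_ext := (bc_ext c1)(ad := bc_main c1 (bc_mhead c1))\<rparr>, dist)
        else (c1, 0))"

definition bio_step :: "bio \<Rightarrow> bconf \<Rightarrow> bconf \<times> nat" where
  "bio_step m c =
    (case b_delta m (bc_state c) (bc_main c (bc_mhead c)) (bc_maddr c (bc_mahead c))
                    (bc_eaddr c (bc_eahead c)) (bc_ext c (bc_ehead c)) of
      Comp q' wm wa we dm da de \<Rightarrow>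
        bio_enter m (c\<lparr> bc_state := q',
                        bc_main := (bc_main c)(bc_mhead c := wm),
                        bc_mhead := mv_bounded (b_mem m) dm (bc_mhead c),
                        bc_maddr := (bc_maddr c)(bc_mahead c := wa),
                        bc_mahead := mv da (bc_mahead c),
                        bc_eaddr := (bc_eaddr c)(bc_eahead c := we),
                        bc_eahead := mv de (bc_eahead c) \<rparr>)
    | ExtAcc q' we de \<Rightarrow>
        (let (c', k) = bio_enter m (c\<lparr> bc_state := q',
                          bc_ext := (bc_ext c)(bc_ehead c := we),
                          bc_ehead := mv de (bc_ehead c) \<rparr>)
         in (c', k + (if mv de (bc_ehead c) = bc_ehead c then 0 else 1))))"

definition bio_conf :: "bio \<Rightarrow> nat list \<Rightarrow> nat \<Rightarrow> bconf" where
  "bio_conf m w k = ((fst \<circ> bio_step m) ^^ k) (bio_init_conf m w)"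

definition bio_halted :: "bio \<Rightarrow> bconf \<Rightarrow> bool" where
  "bio_halted m c \<longleftrightarrow> bc_state c \<in> b_acc m \<union> b_rej m"

definition bio_halts :: "bio \<Rightarrow> nat list \<Rightarrow> bool" where
  "bio_halts m w \<longleftrightarrow> (\<exists>k. bio_halted m (bio_conf m w k))"

definition bio_steps :: "bio \<Rightarrow> nat list \<Rightarrow> nat" where
  "bio_steps m w = (LEAST k. bio_halted m (bio_conf m w k))"

definition bio_result :: "bio \<Rightarrow> nat list \<Rightarrow> bool option" where
  "bio_result m w = (if bio_halts m w
      then Some (bc_state (bio_conf m w (bio_steps m w)) \<in> b_acc m) else None)"

text \<open>External access trace complexity: total number of moves of the external head.\<close>
definition bio_trace :: "bio \<Rightarrow> nat list \<Rightarrow> nat" where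
  "bio_trace m w = (\<Sum>k<bio_steps m w. snd (bio_step m (bio_conf m w k)))"

definition bio_trace_bound :: "bio \<Rightarrow> (nat \<Rightarrow> nat) \<Rightarrow> bool" where
  "bio_trace_bound m f \<longleftrightarrow>
     (\<exists>c N. \<forall>w. valid_input (b_sigma m) w \<and> length w \<ge> N \<longrightarrow>
        bio_halts m w \<and> bio_trace m w \<le> c * f (length w))"

definition bio_simulates :: "bio \<Rightarrow> tlm \<Rightarrow> bool" where
  "bio_simulates m' m \<longleftrightarrow> b_sigma m' = t_sigma m \<and>
     (\<forall>w. valid_input (t_sigma m) w \<longrightarrow> bio_result m' w = tlm_result m w)"

end

theory Submission imports Defs begin

text \<open>The RATM-BIO runs the transition function of the RATM-TLM unchanged, using only main
memory computation transitions; the walk of the external head is then performed by the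
Read/Write states themselves.  The head stays where the last IO operation left it, so an IO
operation moves it between two cells below the space bound, and the trace is at most
IO time times space.\<close>

definition bio_of_tlm :: "tlm \<Rightarrow> bio" where
  "bio_of_tlm m = \<lparr> b_states = t_states m, b_init = t_init m, b_acc = t_acc m, b_rej = t_rej m,
     b_qa = t_qa m, b_rd = t_rd m, b_wr = t_wr m, b_alpha = t_alpha m, b_sigma = t_sigma m,
     b_mem = t_mem m,
     b_delta = (\<lambda>q a b c _. case t_delta m q a b c of
                  (q', x, y, z, d1, d2, d3) \<Rightarrow> Comp q' x y z d1 d2 d3) \<rparr>"

definition tconf_of_bconf :: "bconf \<Rightarrow> tconf" where
  "tconf_of_bconf c = \<lparr> tc_state = bc_state c, tc_main = bc_main c, tc_mhead = bc_mhead c,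
     tc_maddr = bc_maddr c, tc_mahead = bc_mahead c, tc_ext = bc_ext c,
     tc_eaddr = bc_eaddr c, tc_eahead = bc_eahead c \<rparr>"

lemma bio_of_tlm_simps [simp]:
  "b_states (bio_of_tlm m) = t_states m" "b_init (bio_of_tlm m) = t_init m"
  "b_acc (bio_of_tlm m) = t_acc m" "b_rej (bio_of_tlm m) = t_rej m"
  "b_qa (bio_of_tlm m) = t_qa m" "b_rd (bio_of_tlm m) = t_rd m" "b_wr (bio_of_tlm m) = t_wr m"
  "b_alpha (bio_of_tlm m) = t_alpha m" "b_sigma (bio_of_tlm m) = t_sigma m"
  "b_mem (bio_of_tlm m) = t_mem m"
  by (simp_all add: bio_of_tlm_def)

lemma wf_bio_bio_of_tlm:
  assumes "wf_tlm m"
  shows "wf_bio (bio_of_tlm m)"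
proof -
  have "btrans_ok (bio_of_tlm m) (b_delta (bio_of_tlm m) q a b c e)"
    if "q \<in> t_states m - (t_acc m \<union> t_rej m)" "a \<in> t_alpha m" "b \<in> t_alpha m" "c \<in> t_alpha m"
    for q a b c e
  proof -
    obtain q' x y z d1 d2 d3 where \<delta>: "t_delta m q a b c = (q', x, y, z, d1, d2, d3)"
      by (metis prod_cases7)
    show ?thesis
      using assms that unfolding wf_tlm_def
      by (simp add: bio_of_tlm_def \<delta>) (metis (mono_tags, lifting) case_prod_conv \<delta>)
  qed
  then show ?thesis
    using assms unfolding wf_tlm_def wf_bio_def by (simp add: bio_of_tlm_def)
qed

lemma bio_step_bio_of_tlm:
  fixes m :: tlm and c :: bconf
  assumes "t_rd m \<inter> t_wr m = {}"
  defines "c' \<equiv> tlm_step m (tconf_of_bconf c)"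
  defines "a \<equiv> addr_val (tc_eaddr c')"
  shows "tconf_of_bconf (fst (bio_step (bio_of_tlm m) c)) = c'"
    and "bc_ehead (fst (bio_step (bio_of_tlm m) c)) =
           (if tc_state c' \<in> t_rd m \<union> t_wr m then a else bc_ehead c)"
    and "snd (bio_step (bio_of_tlm m) c) =
           (if tc_state c' \<in> t_rd m \<union> t_wr m then
              (if bc_ehead c \<le> a then a - bc_ehead c else bc_ehead c - a) else 0)"
proof -
  obtain q' x y z d1 d2 d3 where \<delta>: "t_delta m (bc_state c) (bc_main c (bc_mhead c))
      (bc_maddr c (bc_mahead c)) (bc_eaddr c (bc_eahead c)) = (q', x, y, z, d1, d2, d3)"
    by (metis prod_cases7)
  note defs = bio_step_def tlm_step_def bio_of_tlm_def tconf_of_bconf_def bio_enter_def Let_def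
    \<delta> c'_def a_def
  show "tconf_of_bconf (fst (bio_step (bio_of_tlm m) c)) = c'"
    using assms(1) by (simp add: defs) auto
  show "bc_ehead (fst (bio_step (bio_of_tlm m) c)) =
      (if tc_state c' \<in> t_rd m \<union> t_wr m then a else bc_ehead c)"
    using assms(1) by (simp add: defs)
  show "snd (bio_step (bio_of_tlm m) c) = (if tc_state c' \<in> t_rd m \<union> t_wr m then
      (if bc_ehead c \<le> a then a - bc_ehead c else bc_ehead c - a) else 0)"
    using assms(1) by (simp add: defs)
qed

lemma bio_conf_Suc: "bio_conf m w (Suc k) = fst (bio_step m (bio_conf m w k))"
  by (simp add: bio_conf_def)

lemma tlm_conf_Suc: "tlm_conf m w (Suc k) = tlm_step m (tlm_conf m w k)"
  by (simp add: tlm_conf_def)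

lemma io_addr_less_tlm_space:
  assumes "k < tlm_steps m w" "tlm_is_io m w k"
  shows "addr_val (tc_eaddr (tlm_conf m w (Suc k))) < tlm_space m w"
proof -
  let ?A = "{length w} \<union> {Suc (addr_val (tc_eaddr (tlm_conf m w (Suc k)))) | k.
              k < tlm_steps m w \<and> tlm_is_io m w k}"
  have "?A \<subseteq> {length w} \<union> (\<lambda>k. Suc (addr_val (tc_eaddr (tlm_conf m w (Suc k))))) ` {..<tlm_steps m w}"
    by auto
  then have "finite ?A"
    using finite_subset by blast
  then have "Suc (addr_val (tc_eaddr (tlm_conf m w (Suc k)))) \<le> tlm_space m w"
    unfolding tlm_space_def by (rule Max_ge) (use assms in blast)
  then show ?thesis
    by simp
qed

context
  fixes m :: tlm
  \<comment> \<open>A TLM state in both sets would read and write; the BIO machine would only read.\<close>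
  assumes rd_wr_disjoint: "t_rd m \<inter> t_wr m = {}"
begin

lemma tconf_of_bconf_bio_conf: "tconf_of_bconf (bio_conf (bio_of_tlm m) w k) = tlm_conf m w k"
proof (induction k)
  case 0
  show ?case
    by (simp add: bio_conf_def tlm_conf_def tconf_of_bconf_def bio_init_conf_def
        tlm_init_conf_def bio_of_tlm_def)
next
  case (Suc k)
  then show ?case
    by (simp add: bio_conf_Suc tlm_conf_Suc bio_step_bio_of_tlm(1)[OF rd_wr_disjoint])
qed

lemma bc_state_bio_conf: "bc_state (bio_conf (bio_of_tlm m) w k) = tc_state (tlm_conf m w k)"
  by (metis tconf_of_bconf_bio_conf tconf.select_convs(1) tconf_of_bconf_def)

lemma bio_halted_bio_conf:
  "bio_halted (bio_of_tlm m) (bio_conf (bio_of_tlm m) w k) = tlm_halted m (tlm_conf m w k)"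
  by (simp add: bio_halted_def tlm_halted_def bc_state_bio_conf)

lemma bio_halts_bio_of_tlm: "bio_halts (bio_of_tlm m) w = tlm_halts m w"
  by (simp add: bio_halts_def tlm_halts_def bio_halted_bio_conf)

lemma bio_steps_bio_of_tlm: "bio_steps (bio_of_tlm m) w = tlm_steps m w"
  by (simp add: bio_steps_def tlm_steps_def bio_halted_bio_conf)

lemma bio_result_bio_of_tlm: "bio_result (bio_of_tlm m) w = tlm_result m w"
  by (simp add: bio_result_def tlm_result_def bio_halts_bio_of_tlm
      bio_steps_bio_of_tlm bc_state_bio_conf)

lemma bio_simulates_bio_of_tlm: "bio_simulates (bio_of_tlm m) m"
  by (simp add: bio_simulates_def bio_result_bio_of_tlm)

lemma bc_ehead_bio_conf_Suc:
  "bc_ehead (bio_conf (bio_of_tlm m) w (Suc k)) =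
     (if tlm_is_io m w k then addr_val (tc_eaddr (tlm_conf m w (Suc k)))
      else bc_ehead (bio_conf (bio_of_tlm m) w k))"
  using bio_step_bio_of_tlm(2)[OF rd_wr_disjoint, of "bio_conf (bio_of_tlm m) w k"]
  by (simp add: bio_conf_Suc tlm_conf_Suc tlm_is_io_def tconf_of_bconf_bio_conf)

lemma bio_step_cost_bio_conf:
  fixes w :: "nat list" and k :: nat
  defines "e \<equiv> bc_ehead (bio_conf (bio_of_tlm m) w k)"
    and "a \<equiv> addr_val (tc_eaddr (tlm_conf m w (Suc k)))"
  shows "snd (bio_step (bio_of_tlm m) (bio_conf (bio_of_tlm m) w k)) =
     (if tlm_is_io m w k then (if e \<le> a then a - e else e - a) else 0)"
  using bio_step_bio_of_tlm(3)[OF rd_wr_disjoint, of "bio_conf (bio_of_tlm m) w k"]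
  by (simp add: e_def a_def tlm_conf_Suc tlm_is_io_def tconf_of_bconf_bio_conf)

lemma bc_ehead_bio_conf_le_tlm_space:
  "k \<le> tlm_steps m w \<Longrightarrow> bc_ehead (bio_conf (bio_of_tlm m) w k) \<le> tlm_space m w"
proof (induction k)
  case 0
  show ?case
    by (simp add: bio_conf_def bio_init_conf_def)
next
  case (Suc k)
  then show ?case
    using io_addr_less_tlm_space[of k m w]
    by (auto simp: bc_ehead_bio_conf_Suc)
qed

lemma bio_step_cost_le_tlm_space:
  assumes "k < tlm_steps m w"
  shows "snd (bio_step (bio_of_tlm m) (bio_conf (bio_of_tlm m) w k)) \<le>
           (if tlm_is_io m w k then tlm_space m w else 0)"
  using bio_step_cost_bio_conf[of w k]
    bc_ehead_bio_conf_le_tlm_space[of k w] io_addr_less_tlm_space[of k m w] assms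
  by auto

lemma bio_trace_bio_of_tlm_le: "bio_trace (bio_of_tlm m) w \<le> tlm_io m w * tlm_space m w"
proof -
  have "bio_trace (bio_of_tlm m) w =
      (\<Sum>k<tlm_steps m w. snd (bio_step (bio_of_tlm m) (bio_conf (bio_of_tlm m) w k)))"
    by (simp add: bio_trace_def bio_steps_bio_of_tlm)
  also have "\<dots> \<le> (\<Sum>k<tlm_steps m w. if tlm_is_io m w k then tlm_space m w else 0)"
    by (rule sum_mono) (use bio_step_cost_le_tlm_space in auto)
  also have "\<dots> = (\<Sum>k\<in>{k \<in> {..<tlm_steps m w}. tlm_is_io m w k}. tlm_space m w)"
    by (rule sum.inter_filter[symmetric]) simp
  also have "\<dots> = tlm_io m w * tlm_space m w"
    by (simp add: tlm_io_def)
  finally show ?thesis .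
qed

end

theorem theorem6:
  fixes m :: tlm and T IO S :: "nat \<Rightarrow> nat"
  assumes "wf_tlm m"
    and "tlm_complexity m T IO S"
  shows "\<exists>m' :: bio. wf_bio m' \<and> b_mem m' = t_mem m \<and> bio_simulates m' m \<and>
           bio_trace_bound m' (\<lambda>n. IO n * S n)"
proof -
  have disj: "t_rd m \<inter> t_wr m = {}"
    using assms(1) by (simp add: wf_tlm_def)
  obtain c N where bounds: "\<And>w. valid_input (t_sigma m) w \<Longrightarrow> length w \<ge> N \<Longrightarrow>
      tlm_halts m w \<and> tlm_io m w \<le> c * IO (length w) \<and> tlm_space m w \<le> c * S (length w)"
    using assms(2) unfolding tlm_complexity_def by blast
  have "bio_halts (bio_of_tlm m) w \<and>
      bio_trace (bio_of_tlm m) w \<le> (c * c) * (IO (length w) * S (length w))"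
    if "valid_input (t_sigma m) w" "length w \<ge> N" for w
  proof -
    have "bio_trace (bio_of_tlm m) w \<le> (c * IO (length w)) * (c * S (length w))"
      using bio_trace_bio_of_tlm_le[OF disj, of w] bounds[OF that]
      by (meson le_trans mult_le_mono)
    then show ?thesis
      using bounds[OF that] bio_halts_bio_of_tlm[OF disj] by (simp add: algebra_simps)
  qed
  then have "bio_trace_bound (bio_of_tlm m) (\<lambda>n. IO n * S n)"
    unfolding bio_trace_bound_def by auto
  then show ?thesis
    using wf_bio_bio_of_tlm[OF assms(1)] bio_simulates_bio_of_tlm[OF disj] by auto
qed

end
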